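(* Let $V\subseteq\mathcal V$ be finite and $\mathcal E,\mathcal F\in\mathit{DProg}(V)$. (1) $\mathcal E\le_T^e\mathcal F$ implies $\mathcal E\le_T^p\mathcal F$, but the converse fails in general (there exist $\mathcal E,\mathcal F$ with $\mathcal E\le_T^p\mathcal F$ and not $\mathcal E\le_T^e\mathcal F$). (2) $\mathcal E\le_P^e\mathcal F$ implies $\mathcal E\le_P^p\mathcal F$, but the converse fails in general.
   Context: $\mathcal V$ is a countably infinite set of qubit variables; $\mathcal H_V=\bigotimes_{q\in V}\mathcal H_q$. $\mathcal D(\mathcal H)$: partial density operators; $\mathcal P(\mathcal H)$: effects (positive operators with eigenvalues in $[0,1]$); $\mathcal S(\mathcal H)$: projectors. $\mathit{DProg}(V)$: completely positive trace-nonincreasing super-operators on $\mathcal L(\mathcal H_V)$. Operators/super-operators on subsystems are implicitly extended by tensoring with identities. For finite $W$ and $M,N\in\mathcal P(\mathcal H_W)$: $\mathcal E\models_{tot}(M,N)$ iff for all finite $X\supseteq V\cup W$ and $\rho\in\mathcal D(\mathcal H_X)$, ${\rm tr}(M\rho)\le{\rm tr}(N\mathcal E(\rho))$; $\mathcal E\models_{par}(M,N)$ iff for all such $X,\rho$, ${\rm tr}(M\rho)\le{\rm tr}(N\mathcal E(\rho))+{\rm tr}(\rho)-{\rm tr}(\mathcal E(\rho))$. $\mathcal E\le_T^e\mathcal F$ iff for every finite $W$ and $M,N\in\mathcal P(\mathcal H_W)$, $\mathcal E\models_{tot}(M,N)\Rightarrow\mathcal F\models_{tot}(M,N)$; $\le_T^p$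 is defined identically but with $M,N$ ranging only over projectors $\mathcal S(\mathcal H_W)$; $\le_P^e,\le_P^p$ likewise with $\models_{par}$. *)

theory Defs
  imports Complex_Main
begin

text \<open>Qubit variables are natural numbers (a countably infinite set).
  A computational-basis state of the register X is an assignment nat \<Rightarrow> bool
  that is False outside X.  An operator on H_X is a matrix indexed by such
  assignments, represented as a function that vanishes outside the basis of X.\<close>

type_synonym bas = "nat \<Rightarrow> bool"
type_synonym qop = "bas \<Rightarrow> bas \<Rightarrow> complex"
type_synonym sop = "qop \<Rightarrow> qop"

definition basis :: "nat set \<Rightarrow> bas set" where
  "basis X = {s. \<forall>q. q \<notin> X \<longrightarrow> \<not> s q}"

definition restr :: "bas \<Rightarrow> nat set \<Rightarrow> bas" where
  "restr s W = (\<lambda>q. if q \<in> W then s q else False)"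

definition is_op :: "nat set \<Rightarrow> qop \<Rightarrow> bool" where
  "is_op X A \<longleftrightarrow> (\<forall>s t. s \<notin> basis X \<or> t \<notin> basis X \<longrightarrow> A s t = 0)"

definition idop :: "nat set \<Rightarrow> qop" where
  "idop X = (\<lambda>s t. if s \<in> basis X \<and> s = t then 1 else 0)"

definition qtr :: "nat set \<Rightarrow> qop \<Rightarrow> complex" where
  "qtr X A = (\<Sum>s\<in>basis X. A s s)"

definition qmult :: "nat set \<Rightarrow> qop \<Rightarrow> qop \<Rightarrow> qop" where
  "qmult X A B = (\<lambda>s t. \<Sum>u\<in>basis X. A s u * B u t)"

definition psd :: "nat set \<Rightarrow> qop \<Rightarrow> bool" where
  "psd X A \<longleftrightarrow> is_op X A \<and>
     (\<forall>v :: bas \<Rightarrow> complex.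
        let z = (\<Sum>s\<in>basis X. \<Sum>t\<in>basis X. cnj (v s) * A s t * v t)
        in Im z = 0 \<and> Re z \<ge> 0)"

definition pdo :: "nat set \<Rightarrow> qop \<Rightarrow> bool" where
  "pdo X \<rho> \<longleftrightarrow> psd X \<rho> \<and> Re (qtr X \<rho>) \<le> 1"

definition effect :: "nat set \<Rightarrow> qop \<Rightarrow> bool" where
  "effect X M \<longleftrightarrow> psd X M \<and> psd X (\<lambda>s t. idop X s t - M s t)"

definition projector :: "nat set \<Rightarrow> qop \<Rightarrow> bool" where
  "projector X M \<longleftrightarrow> is_op X M \<and> (\<forall>s t. M s t = cnj (M t s)) \<and> qmult X M M = M"

text \<open>Cylindrical extension A \<otimes> I_{X - W} of an operator A on H_W (W \<subseteq> X).\<close>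
definition ext :: "nat set \<Rightarrow> nat set \<Rightarrow> qop \<Rightarrow> qop" where
  "ext W X A = (\<lambda>s t. if s \<in> basis X \<and> t \<in> basis X \<and> (\<forall>q. q \<notin> W \<longrightarrow> s q = t q)
                        then A (restr s W) (restr t W) else 0)"

text \<open>Extension E \<otimes> id_{X - V} of a super-operator E on L(H_V) (V \<subseteq> X):
  applied blockwise, the block indexed by the (X - V)-parts of s and t.\<close>
definition sext :: "nat set \<Rightarrow> nat set \<Rightarrow> sop \<Rightarrow> qop \<Rightarrow> qop" where
  "sext V X E \<rho> = (\<lambda>s t. if s \<in> basis X \<and> t \<in> basis X then
      E (\<lambda>a b. if a \<in> basis V \<and> b \<in> basis V then
                 \<rho> (\<lambda>q. if q \<in> V then a q else s q) (\<lambda>q. if q \<in> V then b q else t q)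
               else 0) (restr s V) (restr t V)
    else 0)"

text \<open>Complete positivity: E \<otimes> id is positive for every ancilla register of qubit
  variables (there are infinitely many variables, so every finite ancilla
  dimension is dominated).\<close>
definition DProg :: "nat set \<Rightarrow> sop \<Rightarrow> bool" where
  "DProg V E \<longleftrightarrow>
     (\<forall>A. is_op V A \<longrightarrow> is_op V (E A)) \<and>
     (\<forall>A B c. is_op V A \<longrightarrow> is_op V B \<longrightarrow>
        E (\<lambda>s t. c * A s t + B s t) = (\<lambda>s t. c * E A s t + E B s t)) \<and>
     (\<forall>X. finite X \<longrightarrow> V \<subseteq> X \<longrightarrow> (\<forall>\<rho>. psd X \<rho> \<longrightarrow> psd X (sext V X E \<rho>))) \<and>
     (\<forall>\<rho>. psd V \<rho> \<longrightarrow> Re (qtr V (E \<rho>)) \<le> Re (qtr V \<rho>))"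

definition sat_tot :: "nat set \<Rightarrow> sop \<Rightarrow> nat set \<Rightarrow> qop \<Rightarrow> qop \<Rightarrow> bool" where
  "sat_tot V E W M N \<longleftrightarrow>
     (\<forall>X \<rho>. finite X \<longrightarrow> V \<union> W \<subseteq> X \<longrightarrow> pdo X \<rho> \<longrightarrow>
        Re (qtr X (qmult X (ext W X M) \<rho>))
          \<le> Re (qtr X (qmult X (ext W X N) (sext V X E \<rho>))))"

definition sat_par :: "nat set \<Rightarrow> sop \<Rightarrow> nat set \<Rightarrow> qop \<Rightarrow> qop \<Rightarrow> bool" where
  "sat_par V E W M N \<longleftrightarrow>
     (\<forall>X \<rho>. finite X \<longrightarrow> V \<union> W \<subseteq> X \<longrightarrow> pdo X \<rho> \<longrightarrow>
        Re (qtr X (qmult X (ext W X M) \<rho>))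
          \<le> Re (qtr X (qmult X (ext W X N) (sext V X E \<rho>)))
             + Re (qtr X \<rho>) - Re (qtr X (sext V X E \<rho>)))"

definition le_T_e :: "nat set \<Rightarrow> sop \<Rightarrow> sop \<Rightarrow> bool" where
  "le_T_e V E F \<longleftrightarrow> (\<forall>W M N. finite W \<longrightarrow> effect W M \<longrightarrow> effect W N \<longrightarrow>
      sat_tot V E W M N \<longrightarrow> sat_tot V F W M N)"

definition le_T_p :: "nat set \<Rightarrow> sop \<Rightarrow> sop \<Rightarrow> bool" where
  "le_T_p V E F \<longleftrightarrow> (\<forall>W M N. finite W \<longrightarrow> projector W M \<longrightarrow> projector W N \<longrightarrow>
      sat_tot V E W M N \<longrightarrow> sat_tot V F W M N)"

definition le_P_e :: "nat set \<Rightarrow> sop \<Rightarrow> sop \<Rightarrow> bool" where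
  "le_P_e V E F \<longleftrightarrow> (\<forall>W M N. finite W \<longrightarrow> effect W M \<longrightarrow> effect W N \<longrightarrow>
      sat_par V E W M N \<longrightarrow> sat_par V F W M N)"

definition le_P_p :: "nat set \<Rightarrow> sop \<Rightarrow> sop \<Rightarrow> bool" where
  "le_P_p V E F \<longleftrightarrow> (\<forall>W M N. finite W \<longrightarrow> projector W M \<longrightarrow> projector W N \<longrightarrow>
      sat_par V E W M N \<longrightarrow> sat_par V F W M N)"

end

theory Submission
  imports Defs
begin

(* Every projector is an effect, so the effect-based orders refine the projector-based ones;
   the scalings c * id separate them.  Suppose c * id satisfies the total-correctness
   specification (P, Q) with P, Q projectors and c < 1.  Testing it on the pure states
   sigma = |P e_u><P e_u| in the range of P gives tr(P sigma) <= c tr(Q sigma) <= c tr(P sigma),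
   so P = 0 and every program satisfies (P, Q); yet c * id satisfies the effect specification
   (c * I, I), which d * id with d < c violates.  Dually, if c * id with c > 0 satisfies the
   partial-correctness specification (P, Q), the same test states give tr((I - Q) sigma) <= 0,
   so Q P = P, Q - P is a projector and the identity satisfies (P, Q); yet c * id satisfies
   ((1 - c) * I, 0), which d * id with d > c violates. *)
lemma finite_basis:
  assumes "finite X"
  shows "finite (basis X)"
proof -
  have "basis X \<subseteq> (\<lambda>S q. q \<in> S) ` Pow X"
  proof
    fix s assume "s \<in> basis X"
    then have "{q. s q} \<subseteq> X" and "s = (\<lambda>q. q \<in> {q. s q})" by (auto simp: basis_def)
    then show "s \<in> (\<lambda>S q. q \<in> S) ` Pow X" by blast
  qed
  then show ?thesis using assms by (meson finite_Pow_iff finite_imageI finite_subset)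
qed

lemma psd_is_op: "psd X \<rho> \<Longrightarrow> is_op X \<rho>"
  by (simp add: psd_def)

lemma pdo_is_op: "pdo X \<rho> \<Longrightarrow> is_op X \<rho>"
  by (simp add: pdo_def psd_def)

lemma qmult_idop_left:
  assumes "finite X" "is_op X A"
  shows "qmult X (idop X) A = A"
proof (intro ext)
  fix s t
  have "qmult X (idop X) A s t = (\<Sum>u\<in>basis X. if u = s then A s t else 0)"
    unfolding qmult_def by (intro sum.cong) (auto simp: idop_def)
  then show "qmult X (idop X) A s t = A s t"
    using assms by (auto simp: finite_basis is_op_def)
qed

lemma qmult_idop_right:
  assumes "finite X" "is_op X A"
  shows "qmult X A (idop X) = A"
proof (intro ext)
  fix s t
  have "qmult X A (idop X) s t = (\<Sum>u\<in>basis X. if u = t then A s t else 0)"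
    unfolding qmult_def by (intro sum.cong) (auto simp: idop_def)
  then show "qmult X A (idop X) s t = A s t"
    using assms by (auto simp: finite_basis is_op_def)
qed

lemma qmult_diff_left:
  "qmult X (\<lambda>s t. A s t - B s t) C = (\<lambda>s t. qmult X A C s t - qmult X B C s t)"
  by (simp add: qmult_def left_diff_distrib sum_subtractf)

lemma qmult_diff_right:
  "qmult X A (\<lambda>s t. B s t - C s t) = (\<lambda>s t. qmult X A B s t - qmult X A C s t)"
  by (simp add: qmult_def right_diff_distrib sum_subtractf)

lemma qtr_diff: "qtr X (\<lambda>s t. A s t - B s t) = qtr X A - qtr X B"
  by (simp add: qtr_def sum_subtractf)

definition scale_op :: "real \<Rightarrow> sop" where
  "scale_op c A = (\<lambda>s t. complex_of_real c * A s t)"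

lemma qtr_scale_op: "qtr X (scale_op c A) = complex_of_real c * qtr X A"
  by (simp add: scale_op_def qtr_def sum_distrib_left)

lemma qmult_scale_op_left: "qmult X (scale_op c A) B = scale_op c (qmult X A B)"
  by (simp add: scale_op_def qmult_def sum_distrib_left mult.assoc)

lemma qmult_scale_op_right: "qmult X A (scale_op c B) = scale_op c (qmult X A B)"
  by (simp add: scale_op_def qmult_def sum_distrib_left mult_ac)

lemma is_op_scale_op: "is_op X A \<Longrightarrow> is_op X (scale_op c A)"
  by (simp add: is_op_def scale_op_def)

lemma psd_scale_op:
  assumes "psd X A" "0 \<le> c"
  shows "psd X (scale_op c A)"
proof -
  have "(\<Sum>s\<in>basis X. \<Sum>t\<in>basis X. cnj (v s) * scale_op c A s t * v t)
      = complex_of_real c * (\<Sum>s\<in>basis X. \<Sum>t\<in>basis X. cnj (v s) * A s t * v t)" for v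
    by (simp add: scale_op_def sum_distrib_left mult_ac)
  then show ?thesis
    using assms is_op_scale_op by (simp add: psd_def Let_def)
qed

lemma sext_scale_op:
  assumes "is_op X \<rho>"
  shows "sext V X (scale_op c) \<rho> = scale_op c \<rho>"
proof (intro ext)
  fix s t
  have restr_basis: "restr u V \<in> basis V" for u by (simp add: restr_def basis_def)
  have restr_merge: "(\<lambda>q. if q \<in> V then restr u V q else u q) = u" for u
    by (auto simp: restr_def)
  show "sext V X (scale_op c) \<rho> s t = scale_op c \<rho> s t"
    using assms by (simp add: sext_def scale_op_def restr_basis restr_merge is_op_def)
qed

lemma projector_is_op: "projector X P \<Longrightarrow> is_op X P"
  by (simp add: projector_def)

lemma projector_cnj: "projector X P \<Longrightarrow> P s t = cnj (P t s)"
  unfolding projector_def by blast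

lemma projector_qmult_self: "projector X P \<Longrightarrow> qmult X P P = P"
  by (simp add: projector_def)

lemma projector_entry: "projector X P \<Longrightarrow> P s t = (\<Sum>k\<in>basis X. P s k * P k t)"
  unfolding projector_def by (metis qmult_def)

lemma sum_cnj_mult_self:
  "(\<Sum>k\<in>B. cnj (y k) * y k) = complex_of_real (\<Sum>k\<in>B. (cmod (y k))\<^sup>2)"
  unfolding of_real_sum by (intro sum.cong refl) (metis complex_norm_square of_real_power mult.commute)

lemma projector_quadratic_form:
  assumes "projector X A"
  shows "(\<Sum>s\<in>basis X. \<Sum>t\<in>basis X. cnj (w s) * A s t * w t)
       = complex_of_real (\<Sum>k\<in>basis X. (cmod (\<Sum>t\<in>basis X. A k t * w t))\<^sup>2)"
proof -
  let ?B = "basis X"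
  have "(\<Sum>s\<in>?B. \<Sum>t\<in>?B. cnj (w s) * A s t * w t)
      = (\<Sum>s\<in>?B. \<Sum>t\<in>?B. \<Sum>k\<in>?B. cnj (w s) * A s k * A k t * w t)"
    by (subst projector_entry[OF assms]) (simp add: sum_distrib_left sum_distrib_right mult.assoc)
  also have "\<dots> = (\<Sum>k\<in>?B. \<Sum>s\<in>?B. \<Sum>t\<in>?B. cnj (w s) * A s k * A k t * w t)"
    by (subst sum.swap) (subst sum.swap, rule refl)
  also have "\<dots> = (\<Sum>k\<in>?B. \<Sum>s\<in>?B. \<Sum>t\<in>?B. (cnj (A k s) * cnj (w s)) * (A k t * w t))"
    by (intro sum.cong refl) (subst (2) projector_cnj[OF assms], simp add: mult_ac)
  also have "\<dots> = (\<Sum>k\<in>?B. cnj (\<Sum>t\<in>?B. A k t * w t) * (\<Sum>t\<in>?B. A k t * w t))"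
    by (simp add: sum_product)
  finally show ?thesis by (simp only: sum_cnj_mult_self)
qed

lemma projector_psd: "projector X P \<Longrightarrow> psd X P"
  by (simp add: psd_def projector_quadratic_form projector_is_op sum_nonneg)

lemma is_op_idop: "is_op X (idop X)"
  by (simp add: is_op_def idop_def)

lemma projector_idop: "finite X \<Longrightarrow> projector X (idop X)"
  by (auto simp: projector_def is_op_idop qmult_idop_left) (auto simp: idop_def)

lemma projector_compl:
  assumes "finite X" "projector X P"
  shows "projector X (\<lambda>s t. idop X s t - P s t)"
  unfolding projector_def
proof (intro conjI allI)
  have P: "is_op X P" "qmult X P P = P"
    using assms(2) by (simp_all add: projector_is_op projector_qmult_self)
  then show "is_op X (\<lambda>s t. idop X s t - P s t)"
    by (simp add: is_op_def idop_def)
  show "idop X s t - P s t = cnj (idop X t s - P t s)" for s t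
    using projector_cnj[OF assms(2), of s t] by (auto simp: idop_def)
  show "qmult X (\<lambda>s t. idop X s t - P s t) (\<lambda>s t. idop X s t - P s t) = (\<lambda>s t. idop X s t - P s t)"
    using assms(1) P
    by (simp add: qmult_diff_left qmult_diff_right qmult_idop_left qmult_idop_right is_op_idop)
qed

lemma projector_effect: "finite X \<Longrightarrow> projector X P \<Longrightarrow> effect X P"
  by (simp add: effect_def projector_psd projector_compl)

lemma qmult_ext:
  assumes "W \<subseteq> X" "finite X"
  shows "qmult X (ext W X A) (ext W X B) = ext W X (qmult W A B)"
proof (intro ext)
  fix s t
  show "qmult X (ext W X A) (ext W X B) s t = ext W X (qmult W A B) s t"
  proof (cases "s \<in> basis X \<and> t \<in> basis X \<and> (\<forall>q. q \<notin> W \<longrightarrow> s q = t q)")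
    case False
    then have "ext W X A s u * ext W X B u t = 0" for u by (auto simp: ext_def)
    then have "qmult X (ext W X A) (ext W X B) s t = 0"
      unfolding qmult_def by (simp del: mult_eq_0_iff)
    moreover have "ext W X (qmult W A B) s t = 0"
      using False unfolding ext_def by meson
    ultimately show ?thesis by simp
  next
    case True
    let ?U = "{u \<in> basis X. \<forall>q. q \<notin> W \<longrightarrow> u q = s q}"
    have "bij_betw (\<lambda>u. restr u W) ?U (basis W)"
      by (rule bij_betw_byWitness[where f' = "\<lambda>a q. if q \<in> W then a q else s q"])
        (use True assms(1) in \<open>auto simp: restr_def basis_def\<close>)
    then have reindex: "(\<Sum>u\<in>?U. A (restr s W) (restr u W) * B (restr u W) (restr t W))
        = (\<Sum>a\<in>basis W. A (restr s W) a * B a (restr t W))"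
      by (rule sum.reindex_bij_betw)
    have "qmult X (ext W X A) (ext W X B) s t
        = (\<Sum>u\<in>basis X. if u \<in> ?U then A (restr s W) (restr u W) * B (restr u W) (restr t W) else 0)"
      unfolding qmult_def using True by (intro sum.cong refl) (auto simp: ext_def)
    also have "\<dots> = (\<Sum>u\<in>?U. A (restr s W) (restr u W) * B (restr u W) (restr t W))"
      using finite_basis[OF assms(2)] by (simp add: sum.inter_filter)
    also note reindex
    finally show ?thesis using True by (simp add: ext_def qmult_def)
  qed
qed

lemma projector_ext:
  assumes "W \<subseteq> X" "finite X" "projector W M"
  shows "projector X (ext W X M)"
  unfolding projector_def
proof (intro conjI allI)
  show "is_op X (ext W X M)" by (simp add: is_op_def ext_def)
  show "ext W X M s t = cnj (ext W X M t s)" for s t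
    using projector_cnj[OF assms(3), of "restr s W" "restr t W"] by (auto simp: ext_def)
  show "qmult X (ext W X M) (ext W X M) = ext W X M"
    using qmult_ext[OF assms(1,2)] projector_qmult_self[OF assms(3)] by simp
qed

lemma projector_trace_nonneg:
  assumes "finite X" "projector X R" "psd X \<rho>"
  shows "0 \<le> Re (qtr X (qmult X R \<rho>))"
proof -
  let ?B = "basis X"
  have form_nonneg: "0 \<le> Re (\<Sum>u\<in>?B. \<Sum>s\<in>?B. cnj (v u) * \<rho> u s * v s)" for v
    using assms(3) unfolding psd_def Let_def by blast
  have "qtr X (qmult X R \<rho>) = (\<Sum>s\<in>?B. \<Sum>u\<in>?B. \<Sum>k\<in>?B. R s k * R k u * \<rho> u s)"
    unfolding qtr_def qmult_def by (subst projector_entry[OF assms(2)]) (simp add: sum_distrib_right)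
  also have "\<dots> = (\<Sum>s\<in>?B. \<Sum>k\<in>?B. \<Sum>u\<in>?B. R s k * R k u * \<rho> u s)"
    by (rule sum.cong[OF refl], rule sum.swap)
  also have "\<dots> = (\<Sum>k\<in>?B. \<Sum>u\<in>?B. \<Sum>s\<in>?B. R s k * R k u * \<rho> u s)"
    by (subst sum.swap) (rule sum.cong[OF refl], rule sum.swap)
  also have "\<dots> = (\<Sum>k\<in>?B. \<Sum>u\<in>?B. \<Sum>s\<in>?B. cnj (R u k) * \<rho> u s * R s k)"
    by (intro sum.cong refl) (subst (2) projector_cnj[OF assms(2)], simp add: mult_ac)
  finally show ?thesis
    using form_nonneg[of "\<lambda>x. R x k" for k] by (simp add: sum_nonneg)
qed

lemma psd_trace_nonneg: "finite X \<Longrightarrow> psd X \<rho> \<Longrightarrow> 0 \<le> Re (qtr X \<rho>)"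
  using projector_trace_nonneg[OF _ projector_idop] by (metis psd_is_op qmult_idop_left)

lemma qtr_qmult_compl:
  assumes "finite X" "is_op X \<rho>"
  shows "qtr X (qmult X (\<lambda>s t. idop X s t - A s t) \<rho>) = qtr X \<rho> - qtr X (qmult X A \<rho>)"
  using assms by (simp add: qmult_diff_left qtr_diff qmult_idop_left)

lemma projector_trace_le_trace:
  assumes "finite X" "projector X Q" "psd X \<rho>"
  shows "Re (qtr X (qmult X Q \<rho>)) \<le> Re (qtr X \<rho>)"
  using projector_trace_nonneg[OF assms(1) projector_compl[OF assms(1,2)] assms(3)]
  by (simp add: qtr_qmult_compl[OF assms(1) psd_is_op[OF assms(3)]])

(* For a projector P this is the rank-one operator |P e_u><P e_u|, a subnormalised
   pure state in the range of P. *)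
definition col_outer :: "qop \<Rightarrow> bas \<Rightarrow> qop" where
  "col_outer P u = (\<lambda>s t. P s u * P u t)"

lemma qtr_qmult_col_outer:
  assumes "projector X A" "projector X P"
  shows "qtr X (qmult X A (col_outer P u))
       = complex_of_real (\<Sum>k\<in>basis X. (cmod (\<Sum>t\<in>basis X. A k t * P t u))\<^sup>2)"
proof -
  have "qtr X (qmult X A (col_outer P u)) = (\<Sum>s\<in>basis X. \<Sum>t\<in>basis X. cnj (P s u) * A s t * P t u)"
    unfolding qtr_def qmult_def col_outer_def
    by (intro sum.cong refl) (subst projector_cnj[OF assms(2), of u], simp add: mult_ac)
  then show ?thesis by (simp add: projector_quadratic_form[OF assms(1)])
qed

lemma projector_diag:
  assumes "projector X P"
  shows "P u u = complex_of_real (\<Sum>k\<in>basis X. (cmod (P k u))\<^sup>2)"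
proof -
  have "P u u = (\<Sum>k\<in>basis X. cnj (P k u) * P k u)"
    by (subst projector_entry[OF assms]) (intro sum.cong refl, subst projector_cnj[OF assms], simp)
  then show ?thesis by (simp add: sum_cnj_mult_self)
qed

lemma qtr_col_outer: "projector X P \<Longrightarrow> qtr X (col_outer P u) = P u u"
  unfolding qtr_def col_outer_def by (subst projector_entry[of X P u u]) (simp_all add: mult.commute)

lemma qtr_qmult_col_outer_self:
  assumes "projector X P"
  shows "qtr X (qmult X P (col_outer P u)) = P u u"
proof -
  have "(\<Sum>t\<in>basis X. P k t * P t u) = P k u" for k
    using projector_entry[OF assms] by metis
  then show ?thesis
    by (simp add: qtr_qmult_col_outer[OF assms assms] projector_diag[OF assms])
qed

lemma psd_col_outer:
  assumes "projector X P"
  shows "psd X (col_outer P u)"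
proof -
  have form: "(\<Sum>s\<in>basis X. \<Sum>t\<in>basis X. cnj (v s) * col_outer P u s t * v t)
      = complex_of_real ((cmod (\<Sum>t\<in>basis X. P u t * v t))\<^sup>2)" for v
  proof -
    have "(\<Sum>s\<in>basis X. \<Sum>t\<in>basis X. cnj (v s) * col_outer P u s t * v t)
        = (\<Sum>s\<in>basis X. \<Sum>t\<in>basis X. (cnj (P u s) * cnj (v s)) * (P u t * v t))"
      unfolding col_outer_def by (intro sum.cong refl) (subst projector_cnj[OF assms], simp add: mult_ac)
    also have "\<dots> = cnj (\<Sum>t\<in>basis X. P u t * v t) * (\<Sum>t\<in>basis X. P u t * v t)"
      by (simp add: sum_product)
    also have "\<dots> = complex_of_real ((cmod (\<Sum>t\<in>basis X. P u t * v t))\<^sup>2)"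
      by (subst complex_norm_square) (rule mult.commute)
    finally show ?thesis .
  qed
  have "is_op X (col_outer P u)"
    using projector_is_op[OF assms] unfolding is_op_def col_outer_def
    by (metis mult_zero_left mult_zero_right)
  then show ?thesis
    unfolding psd_def Let_def form by simp
qed

lemma pdo_col_outer:
  assumes "finite X" "projector X P"
  shows "pdo X (col_outer P u)"
proof -
  define r where "r = (\<Sum>k\<in>basis X. (cmod (P k u))\<^sup>2)"
  have diag: "P u u = complex_of_real r"
    unfolding r_def by (rule projector_diag[OF assms(2)])
  have "r \<le> 1"
  proof (cases "u \<in> basis X")
    case True
    have "0 \<le> r" by (simp add: r_def sum_nonneg)
    moreover have "(cmod (P u u))\<^sup>2 \<le> r"
      unfolding r_def using True finite_basis[OF assms(1)] by (intro member_le_sum) auto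
    ultimately have "r * r \<le> r"
      using diag by (simp add: power2_eq_square)
    then show ?thesis
      using mult_le_cancel_left1[of r r] by (cases "r = 0") auto
  next
    case False
    then have "P u u = 0"
      using projector_is_op[OF assms(2)] unfolding is_op_def by blast
    then show ?thesis using diag by simp
  qed
  then show ?thesis
    by (simp add: pdo_def psd_col_outer[OF assms(2)] qtr_col_outer[OF assms(2)] diag)
qed

lemma projector_qmult_eq_0:
  assumes "finite X" "projector X R" "projector X P"
    and "\<And>u. Re (qtr X (qmult X R (col_outer P u))) \<le> 0"
  shows "qmult X R P = (\<lambda>s t. 0)"
proof (intro ext)
  fix j u
  show "qmult X R P j u = 0"
  proof (cases "j \<in> basis X")
    case True
    have "(\<Sum>k\<in>basis X. (cmod (\<Sum>t\<in>basis X. R k t * P t u))\<^sup>2) \<le> 0"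
      using assms(4)[of u] by (simp add: qtr_qmult_col_outer[OF assms(2,3)])
    then have "(\<Sum>k\<in>basis X. (cmod (\<Sum>t\<in>basis X. R k t * P t u))\<^sup>2) = 0"
      by (simp add: antisym sum_nonneg)
    then have "(cmod (\<Sum>t\<in>basis X. R j t * P t u))\<^sup>2 = 0"
      using True finite_basis[OF assms(1)] by (simp add: sum_nonneg_eq_0_iff)
    then show ?thesis by (simp add: qmult_def)
  next
    case False
    then show ?thesis
      using projector_is_op[OF assms(2)] by (simp add: qmult_def is_op_def)
  qed
qed

lemma sat_tot_scale_op:
  "sat_tot V (scale_op c) W M N \<longleftrightarrow>
     (\<forall>X \<rho>. finite X \<longrightarrow> V \<union> W \<subseteq> X \<longrightarrow> pdo X \<rho> \<longrightarrow>
        Re (qtr X (qmult X (ext W X M) \<rho>)) \<le> c * Re (qtr X (qmult X (ext W X N) \<rho>)))"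
  unfolding sat_tot_def by (simp add: sext_scale_op pdo_is_op qmult_scale_op_right qtr_scale_op)

lemma sat_par_scale_op:
  "sat_par V (scale_op c) W M N \<longleftrightarrow>
     (\<forall>X \<rho>. finite X \<longrightarrow> V \<union> W \<subseteq> X \<longrightarrow> pdo X \<rho> \<longrightarrow>
        Re (qtr X (qmult X (ext W X M) \<rho>))
          \<le> c * Re (qtr X (qmult X (ext W X N) \<rho>)) + (1 - c) * Re (qtr X \<rho>))"
  unfolding sat_par_def
  by (simp add: sext_scale_op pdo_is_op qmult_scale_op_right qtr_scale_op left_diff_distrib add_diff_eq)

lemma DProg_scale_op:
  assumes "finite V" "0 \<le> c" "c \<le> 1"
  shows "DProg V (scale_op c)"
  unfolding DProg_def
proof (intro conjI allI impI)
  show "is_op V (scale_op c A)" if "is_op V A" for A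
    using that by (rule is_op_scale_op)
  show "scale_op c (\<lambda>s t. d * A s t + B s t) = (\<lambda>s t. d * scale_op c A s t + scale_op c B s t)"
    for A B and d :: complex
    by (simp add: scale_op_def algebra_simps)
  show "psd X (sext V X (scale_op c) \<rho>)" if "psd X \<rho>" for X \<rho>
    using psd_scale_op[OF that assms(2)] by (simp add: sext_scale_op psd_is_op[OF that])
  show "Re (qtr V (scale_op c \<rho>)) \<le> Re (qtr V \<rho>)" if "psd V \<rho>" for \<rho>
    using psd_trace_nonneg[OF assms(1) that] assms(2,3) by (simp add: qtr_scale_op mult_left_le_one_le)
qed

lemma projector_eq_0_if_trace_contracted:
  assumes "finite X" "projector X P" "c < 1"
    and bound: "\<And>\<sigma>. pdo X \<sigma> \<Longrightarrow> Re (qtr X (qmult X P \<sigma>)) \<le> c * Re (qtr X \<sigma>)"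
  shows "P = (\<lambda>s t. 0)"
proof -
  have "Re (qtr X (qmult X P (col_outer P u))) \<le> 0" for u
  proof -
    have "Re (P u u) \<le> c * Re (P u u)"
      using bound[OF pdo_col_outer[OF assms(1,2)], of u]
      by (simp add: qtr_qmult_col_outer_self[OF assms(2)] qtr_col_outer[OF assms(2)])
    then have "Re (P u u) \<le> 0"
      using mult_strict_right_mono[OF \<open>c < 1\<close>, of "Re (P u u)"] by fastforce
    then show ?thesis by (simp add: qtr_qmult_col_outer_self[OF assms(2)])
  qed
  then have "qmult X P P = (\<lambda>s t. 0)"
    by (rule projector_qmult_eq_0[OF assms(1,2,2)])
  then show ?thesis by (simp add: projector_qmult_self[OF assms(2)])
qed

lemma projector_absorbs_if_trace_bound:
  assumes "finite X" "projector X P" "projector X Q" "0 < c"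
    and bound: "\<And>\<sigma>. pdo X \<sigma> \<Longrightarrow>
      Re (qtr X (qmult X P \<sigma>)) \<le> c * Re (qtr X (qmult X Q \<sigma>)) + (1 - c) * Re (qtr X \<sigma>)"
  shows "qmult X Q P = P"
proof -
  let ?Q' = "\<lambda>s t. idop X s t - Q s t"
  have "Re (qtr X (qmult X ?Q' (col_outer P u))) \<le> 0" for u
  proof -
    let ?\<sigma> = "col_outer P u"
    have \<sigma>: "pdo X ?\<sigma>" by (rule pdo_col_outer[OF assms(1,2)])
    have "Re (qtr X ?\<sigma>) \<le> c * Re (qtr X (qmult X Q ?\<sigma>)) + (1 - c) * Re (qtr X ?\<sigma>)"
      using bound[OF \<sigma>] by (simp add: qtr_qmult_col_outer_self[OF assms(2)] qtr_col_outer[OF assms(2)])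
    then have "c * Re (qtr X ?\<sigma>) \<le> c * Re (qtr X (qmult X Q ?\<sigma>))"
      by (simp add: algebra_simps)
    then have "Re (qtr X ?\<sigma>) \<le> Re (qtr X (qmult X Q ?\<sigma>))"
      using \<open>0 < c\<close> by simp
    then show ?thesis
      by (simp add: qtr_qmult_compl[OF assms(1) pdo_is_op[OF \<sigma>]])
  qed
  then have "qmult X ?Q' P = (\<lambda>s t. 0)"
    by (rule projector_qmult_eq_0[OF assms(1) projector_compl[OF assms(1,3)] assms(2)])
  then show ?thesis
    by (simp add: qmult_diff_left qmult_idop_left[OF assms(1) projector_is_op[OF assms(2)]] fun_eq_iff)
qed

lemma qmult_hermitian_swap:
  assumes "\<And>s t. A s t = cnj (A t s)" "\<And>s t. B s t = cnj (B t s)"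
  shows "qmult X A B s t = cnj (qmult X B A t s)"
  unfolding qmult_def cnj_sum by (intro sum.cong refl) (metis assms complex_cnj_mult mult.commute)

lemma projector_diff:
  assumes "finite X" "projector X P" "projector X Q" "qmult X Q P = P"
  shows "projector X (\<lambda>s t. Q s t - P s t)"
  unfolding projector_def
proof (intro conjI allI)
  show "is_op X (\<lambda>s t. Q s t - P s t)"
    using projector_is_op[OF assms(2)] projector_is_op[OF assms(3)] by (simp add: is_op_def)
  show "Q s t - P s t = cnj (Q t s - P t s)" for s t
    using projector_cnj[OF assms(2), of s t] projector_cnj[OF assms(3), of s t] by simp
  have "qmult X P Q = P"
  proof (intro ext)
    fix s t
    have "qmult X P Q s t = cnj (qmult X Q P t s)"
      by (rule qmult_hermitian_swap) (use projector_cnj assms(2,3) in blast)+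
    then show "qmult X P Q s t = P s t"
      using assms(4) projector_cnj[OF assms(2), of s t] by simp
  qed
  then show "qmult X (\<lambda>s t. Q s t - P s t) (\<lambda>s t. Q s t - P s t) = (\<lambda>s t. Q s t - P s t)"
    using assms(4) projector_qmult_self[OF assms(2)] projector_qmult_self[OF assms(3)]
    by (simp add: qmult_diff_left qmult_diff_right)
qed

lemma le_T_p_scale_op:
  assumes "0 \<le> c" "c < 1" "DProg V F"
  shows "le_T_p V (scale_op c) F"
  unfolding le_T_p_def
proof (intro allI impI)
  fix W M N
  assume W: "finite W" "projector W M" "projector W N" and sat: "sat_tot V (scale_op c) W M N"
  show "sat_tot V F W M N"
    unfolding sat_tot_def
  proof (intro allI impI)
    fix X \<rho> assume X: "finite X" "V \<union> W \<subseteq> X" and \<rho>: "pdo X \<rho>"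
    have "W \<subseteq> X" using X(2) by blast
    note P = projector_ext[OF this X(1) W(2)] and Q = projector_ext[OF this X(1) W(3)]
    have "Re (qtr X (qmult X (ext W X M) \<sigma>)) \<le> c * Re (qtr X \<sigma>)" if \<sigma>: "pdo X \<sigma>" for \<sigma>
    proof -
      have "Re (qtr X (qmult X (ext W X M) \<sigma>)) \<le> c * Re (qtr X (qmult X (ext W X N) \<sigma>))"
        using sat X \<sigma> unfolding sat_tot_scale_op by blast
      also have "\<dots> \<le> c * Re (qtr X \<sigma>)"
        using projector_trace_le_trace[OF X(1) Q] \<sigma> \<open>0 \<le> c\<close> by (simp add: pdo_def mult_left_mono)
      finally show ?thesis .
    qed
    then have "ext W X M = (\<lambda>s t. 0)"
      by (rule projector_eq_0_if_trace_contracted[OF X(1) P \<open>c < 1\<close>])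
    moreover have "psd X (sext V X F \<rho>)"
      using \<open>DProg V F\<close> X \<rho> unfolding DProg_def pdo_def by (meson le_sup_iff)
    ultimately show "Re (qtr X (qmult X (ext W X M) \<rho>)) \<le> Re (qtr X (qmult X (ext W X N) (sext V X F \<rho>)))"
      using projector_trace_nonneg[OF X(1) Q] by (simp add: qtr_def qmult_def)
  qed
qed

lemma le_P_p_scale_op:
  assumes "0 < c"
  shows "le_P_p V (scale_op c) (scale_op 1)"
  unfolding le_P_p_def
proof (intro allI impI)
  fix W M N
  assume W: "finite W" "projector W M" "projector W N" and sat: "sat_par V (scale_op c) W M N"
  show "sat_par V (scale_op 1) W M N"
    unfolding sat_par_scale_op
  proof (intro allI impI)
    fix X \<rho> assume X: "finite X" "V \<union> W \<subseteq> X" and \<rho>: "pdo X \<rho>"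
    have "W \<subseteq> X" using X(2) by blast
    note P = projector_ext[OF this X(1) W(2)] and Q = projector_ext[OF this X(1) W(3)]
    have "qmult X (ext W X N) (ext W X M) = ext W X M"
      using projector_absorbs_if_trace_bound[OF X(1) P Q \<open>0 < c\<close>] sat X
      unfolding sat_par_scale_op by blast
    then have "projector X (\<lambda>s t. ext W X N s t - ext W X M s t)"
      by (rule projector_diff[OF X(1) P Q])
    from projector_trace_nonneg[OF X(1) this] \<rho>
    show "Re (qtr X (qmult X (ext W X M) \<rho>))
        \<le> 1 * Re (qtr X (qmult X (ext W X N) \<rho>)) + (1 - 1) * Re (qtr X \<rho>)"
      by (simp add: pdo_def qmult_diff_left qtr_diff)
  qed
qed

lemma effect_scale_idop:
  assumes "finite X" "0 \<le> a" "a \<le> 1"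
  shows "effect X (scale_op a (idop X))"
proof -
  have "(\<lambda>s t. idop X s t - scale_op a (idop X) s t) = scale_op (1 - a) (idop X)"
    by (simp add: scale_op_def algebra_simps)
  then show ?thesis
    using assms projector_psd[OF projector_idop[OF assms(1)]] by (simp add: effect_def psd_scale_op)
qed

lemma ext_empty_scale_idop: "ext {} X (scale_op a (idop {})) = scale_op a (idop X)"
  by (auto simp: ext_def scale_op_def idop_def restr_def basis_def fun_eq_iff)

lemma trace_ext_empty_scale_idop:
  assumes "finite X" "pdo X \<rho>"
  shows "Re (qtr X (qmult X (ext {} X (scale_op a (idop {}))) \<rho>)) = a * Re (qtr X \<rho>)"
  by (simp add: ext_empty_scale_idop qmult_scale_op_left qtr_scale_op
      qmult_idop_left[OF assms(1) pdo_is_op[OF assms(2)]])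

lemma exists_pdo_trace_1: "finite X \<Longrightarrow> \<exists>\<rho>. pdo X \<rho> \<and> qtr X \<rho> = 1"
  using pdo_col_outer[OF _ projector_idop] qtr_col_outer[OF projector_idop]
  by (fastforce simp: idop_def basis_def)

lemma not_le_T_e_scale_op:
  assumes "finite V" "0 \<le> c" "c \<le> 1" "d < c"
  shows "\<not> le_T_e V (scale_op c) (scale_op d)"
proof
  let ?M = "scale_op c (idop {})" and ?N = "scale_op 1 (idop {})"
  have "sat_tot V (scale_op c) {} ?M ?N"
    unfolding sat_tot_scale_op by (simp add: trace_ext_empty_scale_idop)
  moreover have "effect {} ?M" "effect {} ?N"
    using assms(2,3) by (simp_all add: effect_scale_idop)
  moreover assume "le_T_e V (scale_op c) (scale_op d)"
  ultimately have "sat_tot V (scale_op d) {} ?M ?N"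
    unfolding le_T_e_def by blast
  moreover obtain \<rho> where "pdo V \<rho>" "qtr V \<rho> = 1"
    using exists_pdo_trace_1[OF assms(1)] by blast
  ultimately have "c \<le> d"
    using assms(1) unfolding sat_tot_scale_op by (force simp: trace_ext_empty_scale_idop)
  with \<open>d < c\<close> show False by simp
qed

lemma not_le_P_e_scale_op:
  assumes "finite V" "0 \<le> c" "c \<le> 1" "c < d"
  shows "\<not> le_P_e V (scale_op c) (scale_op d)"
proof
  let ?M = "scale_op (1 - c) (idop {})" and ?N = "scale_op 0 (idop {})"
  have "sat_par V (scale_op c) {} ?M ?N"
    unfolding sat_par_scale_op by (simp add: trace_ext_empty_scale_idop)
  moreover have "effect {} ?M" "effect {} ?N"
    using assms(2,3) by (simp_all add: effect_scale_idop)
  moreover assume "le_P_e V (scale_op c) (scale_op d)"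
  ultimately have "sat_par V (scale_op d) {} ?M ?N"
    unfolding le_P_e_def by blast
  moreover obtain \<rho> where "pdo V \<rho>" "qtr V \<rho> = 1"
    using exists_pdo_trace_1[OF assms(1)] by blast
  ultimately have "1 - c \<le> 1 - d"
    using assms(1) unfolding sat_par_scale_op by (force simp: trace_ext_empty_scale_idop)
  with \<open>c < d\<close> show False by simp
qed

theorem proposition4p8:
  fixes V :: "nat set"
  assumes "finite V"
  shows "((\<forall>E F. DProg V E \<longrightarrow> DProg V F \<longrightarrow> le_T_e V E F \<longrightarrow> le_T_p V E F) \<and>
          (\<exists>E F. DProg V E \<and> DProg V F \<and> le_T_p V E F \<and> \<not> le_T_e V E F)) \<and>
         ((\<forall>E F. DProg V E \<longrightarrow> DProg V F \<longrightarrow> le_P_e V E F \<longrightarrow> le_P_p V E F) \<and>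
          (\<exists>E F. DProg V E \<and> DProg V F \<and> le_P_p V E F \<and> \<not> le_P_e V E F))"
proof (intro conjI)
  show "\<forall>E F. DProg V E \<longrightarrow> DProg V F \<longrightarrow> le_T_e V E F \<longrightarrow> le_T_p V E F"
    unfolding le_T_e_def le_T_p_def using projector_effect by blast
  show "\<forall>E F. DProg V E \<longrightarrow> DProg V F \<longrightarrow> le_P_e V E F \<longrightarrow> le_P_p V E F"
    unfolding le_P_e_def le_P_p_def using projector_effect by blast
  have half: "DProg V (scale_op (1/2))" and zero: "DProg V (scale_op 0)" and one: "DProg V (scale_op 1)"
    by (simp_all add: DProg_scale_op[OF assms])
  show "\<exists>E F. DProg V E \<and> DProg V F \<and> le_T_p V E F \<and> \<not> le_T_e V E F"
    using half zero le_T_p_scale_op[of "1/2" V] not_le_T_e_scale_op[OF assms, of "1/2" 0] by auto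
  show "\<exists>E F. DProg V E \<and> DProg V F \<and> le_P_p V E F \<and> \<not> le_P_e V E F"
    using half one le_P_p_scale_op[of "1/2" V] not_le_P_e_scale_op[OF assms, of "1/2" 1] by auto
qed

end
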